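(* Let $\mathcal{U},\mathcal{X}$ be Banach spaces with either $\mathcal{X}=\mathcal{U}^*$ or $\mathcal{U}=\mathcal{X}^*$ (duality pairing $\langle\cdot,\cdot\rangle_{\mathcal{U},\mathcal{X}}$), $\mathcal{W},\mathcal{Y}$ reflexive Banach spaces, $\mathcal{G}$ a Hilbert space, $g^\delta\in\mathcal{G}$, $\alpha>0$, $A\in L(\mathcal{Y},\mathcal{W}^* )$ continuously invertible, $B\in L(\mathcal{U},\mathcal{W}^* )$ admitting $B^*\in L(\mathcal{W},\mathcal{X})$ with $\langle Bu,w\rangle_{\mathcal{W}^*,\mathcal{W}}=\langle u,B^*w\rangle_{\mathcal{U},\mathcal{X}}$ for all $u\in\mathcal{U}$, $w\in\mathcal{W}$, and $C\in L(\mathcal{Y},\mathcal{G})$. Let $\mathcal{R}_\alpha$ be the indicator function of the closed ball $B^\mathcal{U}_{1/\alpha}=\{u\in\mathcal{U}:\|u\|_\mathcal{U}\le1/\alpha\}$ and $J_\alpha(u,y)=\frac12\|Cy-g^\delta\|_\mathcal{G}^2+\mathcal{R}_\alpha(u)$. Let $\mathcal{U}_h\subset\mathcal{U}$, $\mathcal{Y}_h\subset\mathcal{Y}$, $\mathcal{W}_h\subset\mathcal{W}$ be finite-dimensional subspaces. Let $(\bar u,\bar y)$ minimize $J_\alpha$ over $\mathcal{U}\times\mathcal{Y}$ subject to $Ay=Bu$, and let $(\bar u_h,\bar y_h)$ minimize $J_\alpha$ over $\mathcal{U}_h\times\mathcal{Y}_h$ subject to $\langle Ay-Bu,w_h\rangle_{\mathcal{W}^*,\mathcal{W}}=0$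 for all $w_h\in\mathcal{W}_h$. Let $\hat w\in\mathcal{W}$ be the solution of $C^*(C\bar y_h-g^\delta)+A^*\hat w=0$ and $\rho_y:=A\bar y_h-B\bar u_h$. Then $$\|C\bar y_h-C\bar y\|_\mathcal{G}^2\le\frac4\alpha\|B^*\hat w\|_\mathcal{X}-4\langle\bar u_h,B^*\hat w\rangle_{\mathcal{U},\mathcal{X}}+4\|CA^{-1}\rho_y\|_\mathcal{G}^2,$$ $$J_\alpha(\bar u_h,\bar y_h)-J_\alpha(\bar u,\bar y)\le\frac1\alpha\|B^*\hat w\|_\mathcal{X}-\langle\bar u_h,B^*\hat w\rangle_{\mathcal{U},\mathcal{X}}+\|CA^{-1}\rho_y\|_\mathcal{G}\,\|C\bar y_h-g^\delta\|_\mathcal{G}.$$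
   Context: $A^*\in L(\mathcal{W},\mathcal{Y}^* )$ and $C^*\in L(\mathcal{G},\mathcal{Y}^* )$ denote the adjoints defined by $\langle Ay,w\rangle_{\mathcal{W}^*,\mathcal{W}}=\langle y,A^*w\rangle_{\mathcal{Y},\mathcal{Y}^*}$ and $(Cy,g)_\mathcal{G}=\langle y,C^*g\rangle_{\mathcal{Y},\mathcal{Y}^*}$. *)

theory Defs
  imports "HOL-Analysis.Analysis" "HOL-Library.Extended_Real"
begin

text \<open>Duality pairing between real Banach spaces U and X: the pairing is the
  canonical evaluation under an isometric isomorphism X = U* or U = X*.\<close>
definition dual_pairing :: "('u::real_normed_vector \<Rightarrow> 'x::real_normed_vector \<Rightarrow> real) \<Rightarrow> bool" where
  "dual_pairing p \<longleftrightarrow> bounded_bilinear p \<and>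
     ((bij (\<lambda>x. Blinfun (\<lambda>u. p u x)) \<and> (\<forall>x. norm (Blinfun (\<lambda>u. p u x)) = norm x)) \<or>
      (bij (\<lambda>u. Blinfun (\<lambda>x. p u x)) \<and> (\<forall>u. norm (Blinfun (\<lambda>x. p u x)) = norm u)))"

definition reflexive_space :: "'a::real_normed_vector itself \<Rightarrow> bool" where
  "reflexive_space _ \<longleftrightarrow>
     surj (\<lambda>x::'a. Blinfun (\<lambda>f::'a \<Rightarrow>\<^sub>L real. blinfun_apply f x))"

definition R_alpha :: "real \<Rightarrow> 'u::real_normed_vector \<Rightarrow> ereal" where
  "R_alpha \<alpha> u = (if norm u \<le> 1 / \<alpha> then 0 else \<infinity>)"

definition J_alpha :: "('y::real_normed_vector \<Rightarrow>\<^sub>L 'g::real_inner) \<Rightarrow> 'g \<Rightarrow> real \<Rightarrow> 'u::real_normed_vector \<Rightarrow> 'y \<Rightarrow> ereal" where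
  "J_alpha C g\<delta> \<alpha> u y = ereal ((1/2) * (norm (C y - g\<delta>))\<^sup>2) + R_alpha \<alpha> u"

definition finite_dim_subspace :: "'a::real_vector set \<Rightarrow> bool" where
  "finite_dim_subspace S \<longleftrightarrow> subspace S \<and> (\<exists>B. finite B \<and> S = span B)"

end

theory Submission
  imports Defs
begin

text \<open>Let \<open>yt = A\<^sup>-\<^sup>1 B uh\<close> be the exact state of the discrete optimal control,
  \<open>a = C yt - C yb\<close> and \<open>r = C A\<^sup>-\<^sup>1 (A yh - B uh)\<close>, so that \<open>C yh - C yb = a + r\<close>.
  The adjoint equation for \<open>w_hat\<close> turns \<open>(C yh - g\<delta>, a)\<close> into
  \<open>\<langle>ub - uh, B\<^sup>* w_hat\<rangle>\<close>, which is at most \<open>\<parallel>B\<^sup>* w_hat\<parallel> / \<alpha> - \<langle>uh, B\<^sup>* w_hat\<rangle>\<close>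
  because \<open>ub\<close> lies in the ball. Optimality of \<open>ub\<close> over the convex ball gives the
  variational inequality \<open>(C yb - g\<delta>, a) \<ge> 0\<close>. Both estimates follow from these two
  inner product bounds by Cauchy-Schwarz and Young's inequality.\<close>

lemma dual_pairing_bound:
  assumes "dual_pairing p"
  shows "\<bar>p u x\<bar> \<le> norm u * norm x"
proof -
  have bb: "bounded_bilinear p" using assms unfolding dual_pairing_def by blast
  from assms consider "\<forall>x. norm (Blinfun (\<lambda>u. p u x)) = norm x"
    | "\<forall>u. norm (Blinfun (\<lambda>x. p u x)) = norm u" unfolding dual_pairing_def by blast
  then show ?thesis
  proof cases
    case 1
    have "\<bar>p u x\<bar> = norm (blinfun_apply (Blinfun (\<lambda>u. p u x)) u)"
      using bounded_bilinear.bounded_linear_left[OF bb]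
      by (simp add: bounded_linear_Blinfun_apply)
    also have "\<dots> \<le> norm (Blinfun (\<lambda>u. p u x)) * norm u" by (rule norm_blinfun)
    finally show ?thesis using 1 by (simp add: mult.commute)
  next
    case 2
    have "\<bar>p u x\<bar> = norm (blinfun_apply (Blinfun (\<lambda>x. p u x)) x)"
      using bounded_bilinear.bounded_linear_right[OF bb]
      by (simp add: bounded_linear_Blinfun_apply)
    also have "\<dots> \<le> norm (Blinfun (\<lambda>x. p u x)) * norm x" by (rule norm_blinfun)
    finally show ?thesis using 2 by simp
  qed
qed

lemma inner_nonneg_if_norm_le_along_segment:
  fixes a d :: "'a::real_inner"
  assumes "\<And>t. 0 < t \<Longrightarrow> t \<le> 1 \<Longrightarrow> (norm a)\<^sup>2 \<le> (norm (a + t *\<^sub>R d))\<^sup>2"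
  shows "0 \<le> inner a d"
proof (rule ccontr)
  assume neg: "\<not> 0 \<le> inner a d"
  then have nd: "(norm d)\<^sup>2 > 0" by auto
  define t where "t = min 1 (- inner a d / (norm d)\<^sup>2)"
  have "- inner a d / (norm d)\<^sup>2 > 0" using neg nd by (intro divide_pos_pos) auto
  then have t0: "t > 0" by (simp add: t_def)
  have tb: "t * (norm d)\<^sup>2 \<le> - inner a d"
    using nd by (simp add: t_def min_def field_simps)
  have "(norm (a + t *\<^sub>R d))\<^sup>2 = (norm a)\<^sup>2 + 2 * t * inner a d + t * (t * (norm d)\<^sup>2)"
    by (simp add: power2_norm_eq_inner inner_add_left inner_add_right inner_commute
        algebra_simps)
  also have "\<dots> \<le> (norm a)\<^sup>2 + 2 * t * inner a d + t * (- inner a d)"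
    using tb t0 by (intro add_left_mono mult_left_mono) auto
  also have "\<dots> < (norm a)\<^sup>2" using mult_pos_neg[of t "inner a d"] t0 neg by linarith
  finally have "(norm (a + t *\<^sub>R d))\<^sup>2 < (norm a)\<^sup>2" .
  moreover have "t \<le> 1" by (simp add: t_def)
  ultimately show False using assms[of t] t0 by linarith
qed

lemma norm_diff_sq_le_of_inner_bounds:
  fixes e f a r :: "'a::real_inner"
  assumes "0 \<le> inner f a" and "inner e a \<le> D" and "e - f = a + r"
  shows "(norm (e - f))\<^sup>2 \<le> 4 * D + 4 * (norm r)\<^sup>2"
proof -
  have "(norm a)\<^sup>2 = inner e a - inner r a - inner f a"
    using assms(3) by (simp add: power2_norm_eq_inner algebra_simps flip: inner_diff_left)
  also have "\<dots> \<le> D + norm r * norm a"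
    using assms(1,2) Cauchy_Schwarz_ineq2[of r a] by linarith
  also have "norm r * norm a \<le> (norm r)\<^sup>2 / 2 + (norm a)\<^sup>2 / 2"
    using sum_squares_bound[of "norm r" "norm a"] by (simp add: power2_eq_square)
  finally have a2: "(norm a)\<^sup>2 \<le> 2 * D + (norm r)\<^sup>2" by linarith
  have "(norm (a + r))\<^sup>2 \<le> (norm a + norm r)\<^sup>2"
    by (simp add: norm_triangle_ineq power_mono)
  also have "\<dots> \<le> 2 * (norm a)\<^sup>2 + 2 * (norm r)\<^sup>2"
    using sum_squares_bound[of "norm r" "norm a"] by (simp add: power2_eq_square algebra_simps)
  finally show ?thesis using a2 assms(3) by simp
qed

lemma half_norm_sq_diff_le_of_inner_bound:
  fixes e f a r :: "'a::real_inner"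
  assumes "inner e a \<le> D" and "e - f = a + r"
  shows "(1/2) * (norm e)\<^sup>2 - (1/2) * (norm f)\<^sup>2 \<le> D + norm r * norm e"
proof -
  have "(1/2) * (norm e)\<^sup>2 - (1/2) * (norm f)\<^sup>2 = inner e (e - f) - (1/2) * (norm (e - f))\<^sup>2"
    by (simp add: power2_norm_eq_inner inner_diff_left inner_diff_right inner_commute
        algebra_simps)
  also have "\<dots> \<le> inner e a + inner r e"
    using assms(2) by (simp add: inner_add_right inner_commute)
  also have "\<dots> \<le> D + norm r * norm e"
    using assms(1) Cauchy_Schwarz_ineq2[of r e] by linarith
  finally show ?thesis .
qed

lemma J_alpha_in_ball:
  "norm u \<le> 1 / \<alpha> \<Longrightarrow> J_alpha C g\<delta> \<alpha> u y = ereal ((1/2) * (norm (C y - g\<delta>))\<^sup>2)"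
  by (simp add: J_alpha_def R_alpha_def)

lemma norm_le_if_J_alpha_le_J_alpha_0:
  assumes "\<alpha> > 0" and "J_alpha C g\<delta> \<alpha> u y \<le> J_alpha C g\<delta> \<alpha> 0 0"
  shows "norm u \<le> 1 / \<alpha>"
  using assms by (auto simp: J_alpha_def R_alpha_def split: if_splits)

lemma J_alpha_minimizer_variational_inequality:
  fixes A :: "'y::real_normed_vector \<Rightarrow>\<^sub>L 'f::real_normed_vector"
    and Ainv :: "'f \<Rightarrow>\<^sub>L 'y" and B :: "'u::real_normed_vector \<Rightarrow>\<^sub>L 'f"
    and C :: "'y \<Rightarrow>\<^sub>L 'g::real_inner"
  assumes Ainv_left: "\<forall>y. Ainv (A y) = y" and Ainv_right: "\<forall>f. A (Ainv f) = f"
    and constr: "A yb = B ub"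
    and min: "\<forall>u y. A y = B u \<longrightarrow> J_alpha C g\<delta> \<alpha> ub yb \<le> J_alpha C g\<delta> \<alpha> u y"
    and ub: "norm ub \<le> 1 / \<alpha>" and u: "norm u \<le> 1 / \<alpha>"
  shows "0 \<le> inner (C yb - g\<delta>) (C (Ainv (B u)) - C yb)"
proof (rule inner_nonneg_if_norm_le_along_segment)
  fix t :: real assume t: "0 < t" "t \<le> 1"
  define ut where "ut = (1 - t) *\<^sub>R ub + t *\<^sub>R u"
  have "ut \<in> cball 0 (1 / \<alpha>)"
    unfolding ut_def using t ub u by (intro convexD[OF convex_cball]) auto
  then have ut_ball: "norm ut \<le> 1 / \<alpha>" by simp
  have "J_alpha C g\<delta> \<alpha> ub yb \<le> J_alpha C g\<delta> \<alpha> ut (Ainv (B ut))"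
    using min Ainv_right by blast
  then have "(norm (C yb - g\<delta>))\<^sup>2 \<le> (norm (C (Ainv (B ut)) - g\<delta>))\<^sup>2"
    using J_alpha_in_ball[OF ut_ball, where C = C and g\<delta> = g\<delta>]
      J_alpha_in_ball[OF ub, where C = C and g\<delta> = g\<delta>] by simp
  moreover have "yb = Ainv (B ub)" using Ainv_left constr by metis
  ultimately show "(norm (C yb - g\<delta>))\<^sup>2 \<le>
      (norm (C yb - g\<delta> + t *\<^sub>R (C (Ainv (B u)) - C yb)))\<^sup>2"
    by (simp add: ut_def blinfun.add_right blinfun.diff_right blinfun.scaleR_right
        algebra_simps)
qed

theorem proposition4p1:
  fixes p :: "'u::banach \<Rightarrow> 'x::banach \<Rightarrow> real"
    and A :: "'y::banach \<Rightarrow>\<^sub>L ('w::banach \<Rightarrow>\<^sub>L real)"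
    and Ainv :: "('w \<Rightarrow>\<^sub>L real) \<Rightarrow>\<^sub>L 'y"
    and B :: "'u \<Rightarrow>\<^sub>L ('w \<Rightarrow>\<^sub>L real)"
    and Bs :: "'w \<Rightarrow>\<^sub>L 'x"
    and C :: "'y \<Rightarrow>\<^sub>L 'g::{real_inner, complete_space}"
    and g\<delta> :: 'g and \<alpha> :: real
    and Uh :: "'u set" and Yh :: "'y set" and Wh :: "'w set"
    and ub uh :: 'u and yb yh :: 'y and w_hat :: 'w
  assumes pairing: "dual_pairing p"
    and reflW: "reflexive_space TYPE('w)"
    and reflY: "reflexive_space TYPE('y)"
    and alpha_pos: "\<alpha> > 0"
    and Ainv_left: "\<forall>y. Ainv (A y) = y"
    and Ainv_right: "\<forall>f. A (Ainv f) = f"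
    and Bs_adj: "\<forall>u w. B u w = p u (Bs w)"
    and Uh: "finite_dim_subspace Uh" and Yh: "finite_dim_subspace Yh"
    and Wh: "finite_dim_subspace Wh"
    and cont_constr: "A yb = B ub"
    and cont_min: "\<forall>u y. A y = B u \<longrightarrow> J_alpha C g\<delta> \<alpha> ub yb \<le> J_alpha C g\<delta> \<alpha> u y"
    and disc_mem: "uh \<in> Uh" "yh \<in> Yh"
    and disc_constr: "\<forall>wh\<in>Wh. (A yh - B uh) wh = 0"
    and disc_min: "\<forall>u\<in>Uh. \<forall>y\<in>Yh. (\<forall>wh\<in>Wh. (A y - B u) wh = 0) \<longrightarrow>
                     J_alpha C g\<delta> \<alpha> uh yh \<le> J_alpha C g\<delta> \<alpha> u y"
    and w_hat_eq: "\<forall>y. inner (C y) (C yh - g\<delta>) + A y w_hat = 0"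
  shows "((norm (C yh - C yb))\<^sup>2 \<le> 4 / \<alpha> * norm (Bs w_hat) - 4 * p uh (Bs w_hat)
            + 4 * (norm (C (Ainv (A yh - B uh))))\<^sup>2) \<and>
         (J_alpha C g\<delta> \<alpha> uh yh - J_alpha C g\<delta> \<alpha> ub yb \<le>
           ereal (1 / \<alpha> * norm (Bs w_hat) - p uh (Bs w_hat)
                  + norm (C (Ainv (A yh - B uh))) * norm (C yh - g\<delta>)))"
proof -
  have "0 \<in> Uh" "0 \<in> Yh"
    using Uh Yh by (auto simp: finite_dim_subspace_def subspace_0)
  with disc_min have "J_alpha C g\<delta> \<alpha> uh yh \<le> J_alpha C g\<delta> \<alpha> (0::'u) 0"
    by (simp add: blinfun.zero_left)
  with alpha_pos have uh_ball: "norm uh \<le> 1 / \<alpha>"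
    by (rule norm_le_if_J_alpha_le_J_alpha_0)
  from cont_min have "J_alpha C g\<delta> \<alpha> ub yb \<le> J_alpha C g\<delta> \<alpha> (0::'u) 0"
    by (simp add: blinfun.zero_right)
  with alpha_pos have ub_ball: "norm ub \<le> 1 / \<alpha>"
    by (rule norm_le_if_J_alpha_le_J_alpha_0)
  define D where "D = 1 / \<alpha> * norm (Bs w_hat) - p uh (Bs w_hat)"
  define a where "a = C (Ainv (B uh)) - C yb"
  define r where "r = C (Ainv (A yh - B uh))"
  have split: "(C yh - g\<delta>) - (C yb - g\<delta>) = a + r"
    using Ainv_left by (simp add: a_def r_def blinfun.diff_right)
  have "p ub (Bs w_hat) \<le> 1 / \<alpha> * norm (Bs w_hat)"
    using dual_pairing_bound[OF pairing, of ub "Bs w_hat"] ub_ball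
    by (smt (verit) mult_right_mono norm_ge_zero)
  moreover have "inner (C yh - g\<delta>) a = p ub (Bs w_hat) - p uh (Bs w_hat)"
    using w_hat_eq[rule_format, of "Ainv (B uh) - yb"] Ainv_right cont_constr Bs_adj
    by (simp add: a_def blinfun.diff_right inner_commute minus_blinfun.rep_eq)
  ultimately have adjoint_bound: "inner (C yh - g\<delta>) a \<le> D" by (simp add: D_def)
  have "0 \<le> inner (C yb - g\<delta>) a"
    unfolding a_def using Ainv_left Ainv_right cont_constr cont_min ub_ball uh_ball
    by (rule J_alpha_minimizer_variational_inequality)
  from norm_diff_sq_le_of_inner_bounds[OF this adjoint_bound split]
  have "(norm (C yh - C yb))\<^sup>2 \<le> 4 * D + 4 * (norm r)\<^sup>2" by simp
  moreover have "J_alpha C g\<delta> \<alpha> uh yh - J_alpha C g\<delta> \<alpha> ub yb \<le> ereal (D + norm r * norm (C yh - g\<delta>))"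
    using half_norm_sq_diff_le_of_inner_bound[OF adjoint_bound split]
    by (simp add: J_alpha_in_ball[OF uh_ball] J_alpha_in_ball[OF ub_ball])
  ultimately show ?thesis by (simp add: D_def r_def right_diff_distrib)
qed

end
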